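(* Let $A\in\mathcal{PM}(n)$. If the poset vectors of $A$ have pairwise distinct support sizes (i.e., $|\mathrm{supp}(v)|\ne|\mathrm{supp}(w)|$ for all distinct poset vectors $v,w$ of $A$), then $\mathrm{Aut}(A)=\{Q\in\mathfrak P_n: Q^TAQ=A\}$ is trivial, i.e., equals $\{I_n\}$.
   Context: Let $X_n=\{0,1,\ldots,n-1\}$. A naturally labeled (NL) poset on $X_n$ is a partial order $\preceq$ on $X_n$ such that $x\preceq y$ implies $x\le y$ in the usual integer order. Its poset matrix is the $n\times n$ $(0,1)$-matrix $A=(a_{i,j})_{i,j\in X_n}$ with $a_{i,j}=1$ if $j\preceq i$ and $0$ otherwise; $\mathcal{PM}(n)$ is the set of all such matrices. For a row vector $v\in\{0,1\}^n$, $A^v=\begin{bmatrix}A&\mathbf{0}\\ v&1\end{bmatrix}$, and $v$ is a poset vector of $A$ if $A^v\in\mathcal{PM}(n+1)$. $\mathrm{supp}(v)=\{j: v_j=1\}$. $\mathfrak P_n$ is the group of $n\times n$ permutation matrices. *)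

theory Defs
  imports "Jordan_Normal_Form.Matrix"
begin

text \<open>Poset matrices of naturally labeled posets on X_n = {0..<n}:
  a_{i,j} = 1 iff j precedes-or-equals i.  Entries are integers in {0,1}.\<close>

definition poset_matrix :: "nat \<Rightarrow> int mat \<Rightarrow> bool" where
  "poset_matrix n A \<longleftrightarrow>
     A \<in> carrier_mat n n \<and>
     (\<forall>i<n. \<forall>j<n. A $$ (i,j) \<in> {0,1}) \<and>
     (\<forall>i<n. A $$ (i,i) = 1) \<and>
     (\<forall>i<n. \<forall>j<n. A $$ (i,j) = 1 \<and> A $$ (j,i) = 1 \<longrightarrow> i = j) \<and>
     (\<forall>i<n. \<forall>j<n. \<forall>k<n. A $$ (i,j) = 1 \<and> A $$ (j,k) = 1 \<longrightarrow> A $$ (i,k) = 1) \<and>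
     (\<forall>i<n. \<forall>j<n. A $$ (i,j) = 1 \<longrightarrow> j \<le> i)"

text \<open>The extended matrix A^v = [A 0; v 1].\<close>
definition ext_mat :: "int mat \<Rightarrow> int vec \<Rightarrow> int mat" where
  "ext_mat A v = mat (dim_row A + 1) (dim_row A + 1)
     (\<lambda>(i,j). if i < dim_row A \<and> j < dim_row A then A $$ (i,j)
              else if i < dim_row A then 0
              else if j < dim_row A then v $ j
              else 1)"

definition poset_vector :: "int mat \<Rightarrow> int vec \<Rightarrow> bool" where
  "poset_vector A v \<longleftrightarrow>
     dim_vec v = dim_row A \<and> (\<forall>j<dim_vec v. v $ j \<in> {0,1}) \<and>
     poset_matrix (dim_row A + 1) (ext_mat A v)"

definition supp :: "int vec \<Rightarrow> nat set" where
  "supp v = {j. j < dim_vec v \<and> v $ j = 1}"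

definition perm_matrix :: "nat \<Rightarrow> int mat \<Rightarrow> bool" where
  "perm_matrix n Q \<longleftrightarrow>
     Q \<in> carrier_mat n n \<and>
     (\<forall>i<n. \<forall>j<n. Q $$ (i,j) \<in> {0,1}) \<and>
     (\<forall>i<n. \<exists>!j. j < n \<and> Q $$ (i,j) = 1) \<and>
     (\<forall>j<n. \<exists>!i. i < n \<and> Q $$ (i,j) = 1)"

definition Aut :: "nat \<Rightarrow> int mat \<Rightarrow> int mat set" where
  "Aut n A = {Q. perm_matrix n Q \<and> transpose_mat Q * A * Q = A}"

end

theory Submission
  imports Defs
begin

text \<open>A permutation matrix Q with \<open>Q\<^sup>T A Q = A\<close> is the matrix of a permutation \<sigma> with
  \<open>a\<^bsub>\<sigma> i, \<sigma> j\<^esub> = a\<^bsub>i,j\<^esub>\<close>, i.e. of an automorphism of the poset. Such a \<sigma> maps the principal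
  down-set of x bijectively onto the principal down-set of \<sigma> x. Every down-set is the support of
  a poset vector, so these two down-sets are supports of poset vectors of the same size; by
  hypothesis the vectors coincide, and equal principal down-sets force \<sigma> x = x by antisymmetry.\<close>

lemma
  assumes "poset_matrix n A"
  shows poset_matrix_carrier: "A \<in> carrier_mat n n"
    and poset_matrix_01: "\<And>i j. i < n \<Longrightarrow> j < n \<Longrightarrow> A $$ (i,j) \<in> {0,1}"
    and poset_matrix_refl: "\<And>i. i < n \<Longrightarrow> A $$ (i,i) = 1"
    and poset_matrix_antisym:
      "\<And>i j. i < n \<Longrightarrow> j < n \<Longrightarrow> A $$ (i,j) = 1 \<Longrightarrow> A $$ (j,i) = 1 \<Longrightarrow> i = j"
    and poset_matrix_trans:
      "\<And>i j k. i < n \<Longrightarrow> j < n \<Longrightarrow> k < n \<Longrightarrow> A $$ (i,j) = 1 \<Longrightarrow> A $$ (j,k) = 1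
        \<Longrightarrow> A $$ (i,k) = 1"
    and poset_matrix_lower: "\<And>i j. i < n \<Longrightarrow> j < n \<Longrightarrow> A $$ (i,j) = 1 \<Longrightarrow> j \<le> i"
  using assms unfolding poset_matrix_def by meson+

lemma ext_mat_carrier: "ext_mat A v \<in> carrier_mat (dim_row A + 1) (dim_row A + 1)"
  by (simp add: ext_mat_def)

lemma
  assumes "dim_row A = n"
  shows ext_mat_index_upper: "\<And>i j. i < n \<Longrightarrow> j < n \<Longrightarrow> ext_mat A v $$ (i,j) = A $$ (i,j)"
    and ext_mat_index_last_col: "\<And>i. i < n \<Longrightarrow> ext_mat A v $$ (i,n) = 0"
    and ext_mat_index_last_row: "\<And>j. j < n \<Longrightarrow> ext_mat A v $$ (n,j) = v $ j"
    and ext_mat_index_corner: "ext_mat A v $$ (n,n) = 1"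
  using assms by (simp_all add: ext_mat_def)

lemma poset_vectorI:
  assumes A: "poset_matrix n A"
    and dim: "dim_vec v = n"
    and v01: "\<And>j. j < n \<Longrightarrow> v $ j \<in> {0,1}"
    and down_closed: "\<And>y z. y \<in> supp v \<Longrightarrow> z < n \<Longrightarrow> A $$ (y,z) = 1 \<Longrightarrow> z \<in> supp v"
  shows "poset_vector A v"
proof -
  let ?E = "ext_mat A v"
  have rows: "dim_row A = n"
    using poset_matrix_carrier[OF A] by simp
  note upper = ext_mat_index_upper[OF rows] and last_col = ext_mat_index_last_col[OF rows]
    and last_row = ext_mat_index_last_row[OF rows] and corner = ext_mat_index_corner[OF rows]
  have less_Suc: "i < n \<or> i = n" if "i < n + 1" for i
    using that by linarith
  have "poset_matrix (n + 1) ?E"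
    unfolding poset_matrix_def
  proof (intro conjI allI impI)
    show "?E \<in> carrier_mat (n + 1) (n + 1)"
      using ext_mat_carrier[of A v] by (simp only: rows)
  next
    fix i j assume "i < n + 1" "j < n + 1"
    then consider "i < n" "j < n" | "i < n" "j = n" | "i = n" "j < n" | "i = n" "j = n"
      using less_Suc by blast
    then show "?E $$ (i,j) \<in> {0,1}"
    proof cases
      case 1
      then show ?thesis using upper poset_matrix_01[OF A] by simp
    next
      case 2
      then show ?thesis using last_col by simp
    next
      case 3
      then show ?thesis using last_row v01 by simp
    next
      case 4
      then show ?thesis using corner by simp
    qed
  next
    fix i assume "i < n + 1"
    then consider "i < n" | "i = n"
      using less_Suc by blast
    then show "?E $$ (i,i) = 1"
    proof cases
      case 1
      then show ?thesis using upper poset_matrix_refl[OF A] by simp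
    next
      case 2
      then show ?thesis using corner by simp
    qed
  next
    fix i j assume "i < n + 1" "j < n + 1" and ij_ji: "?E $$ (i,j) = 1 \<and> ?E $$ (j,i) = 1"
    then consider "i < n" "j < n" | "i < n" "j = n" | "i = n" "j < n" | "i = n" "j = n"
      using less_Suc by blast
    then show "i = j"
    proof cases
      case 1
      then show ?thesis using ij_ji upper poset_matrix_antisym[OF A] by metis
    next
      case 2
      then show ?thesis using ij_ji last_col by simp
    next
      case 3
      then show ?thesis using ij_ji last_col by simp
    qed simp
  next
    fix i j k assume ijk: "i < n + 1" "j < n + 1" "k < n + 1"
      and ij_jk: "?E $$ (i,j) = 1 \<and> ?E $$ (j,k) = 1"
    show "?E $$ (i,k) = 1"
    proof (cases "j < n")
      case j: True
      have k: "k < n"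
        using ij_jk less_Suc[OF ijk(3)] last_col[OF j] by auto
      consider "i < n" | "i = n"
        using less_Suc[OF ijk(1)] by blast
      then show ?thesis
      proof cases
        case 1
        then show ?thesis
          using ij_jk j k upper poset_matrix_trans[OF A] by metis
      next
        case 2
        then have "j \<in> supp v"
          using ij_jk j last_row dim by (simp add: supp_def)
        then have "k \<in> supp v"
          using down_closed ij_jk j k upper by metis
        then show ?thesis
          using 2 k last_row by (simp add: supp_def)
      qed
    next
      case False
      then have "j = n"
        using less_Suc[OF ijk(2)] by blast
      moreover have "i = n"
        using ij_jk less_Suc[OF ijk(1)] last_col \<open>j = n\<close> by force
      ultimately show ?thesis
        using ij_jk by simp
    qed
  next
    fix i j assume "i < n + 1" "j < n + 1" and ij: "?E $$ (i,j) = 1"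
    then consider "i < n" "j < n" | "i < n" "j = n" | "i = n" "j < n" | "i = n" "j = n"
      using less_Suc by blast
    then show "j \<le> i"
    proof cases
      case 1
      then show ?thesis using ij upper poset_matrix_lower[OF A] by metis
    next
      case 2
      then show ?thesis using ij last_col by simp
    qed simp_all
  qed
  then show ?thesis
    using dim v01 rows by (simp add: poset_vector_def)
qed

lemma ex_poset_vector_supp:
  assumes A: "poset_matrix n A"
    and S: "S \<subseteq> {..<n}"
    and down_closed: "\<And>y z. y \<in> S \<Longrightarrow> z < n \<Longrightarrow> A $$ (y,z) = 1 \<Longrightarrow> z \<in> S"
  shows "\<exists>v. poset_vector A v \<and> supp v = S"
proof -
  define v :: "int vec" where "v = vec n (\<lambda>j. if j \<in> S then 1 else 0)"
  have supp: "supp v = S"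
    using S by (auto simp: supp_def v_def split: if_splits)
  have "poset_vector A v"
  proof (rule poset_vectorI[OF A])
    show "dim_vec v = n" "\<And>j. j < n \<Longrightarrow> v $ j \<in> {0,1}"
      by (simp_all add: v_def)
    show "\<And>y z. y \<in> supp v \<Longrightarrow> z < n \<Longrightarrow> A $$ (y,z) = 1 \<Longrightarrow> z \<in> supp v"
      using down_closed unfolding supp by blast
  qed
  with supp show ?thesis
    by blast
qed

definition down_set :: "nat \<Rightarrow> int mat \<Rightarrow> nat \<Rightarrow> nat set" where
  "down_set n A x = {y. y < n \<and> A $$ (x,y) = 1}"

lemma down_set_subset: "down_set n A x \<subseteq> {..<n}"
  by (auto simp: down_set_def)

lemma down_set_down_closed:
  assumes "poset_matrix n A" "x < n" "y \<in> down_set n A x" "z < n" "A $$ (y,z) = 1"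
  shows "z \<in> down_set n A x"
proof -
  have "y < n" "A $$ (x,y) = 1"
    using assms(3) by (simp_all add: down_set_def)
  then have "A $$ (x,z) = 1"
    using poset_matrix_trans[OF assms(1) assms(2)] assms(4,5) by blast
  then show ?thesis
    using assms(4) by (simp add: down_set_def)
qed

lemma down_set_inj:
  assumes "poset_matrix n A" "x < n" "y < n" "down_set n A x = down_set n A y"
  shows "x = y"
proof -
  have "A $$ (x,y) = 1" "A $$ (y,x) = 1"
    using assms poset_matrix_refl[OF assms(1)] by (auto simp: down_set_def set_eq_iff)
  then show ?thesis
    using poset_matrix_antisym[OF assms(1)] assms(2,3) by blast
qed

lemma image_down_set:
  assumes bij: "bij_betw \<sigma> {..<n} {..<n}"
    and hom: "\<And>i j. i < n \<Longrightarrow> j < n \<Longrightarrow> A $$ (\<sigma> i, \<sigma> j) = A $$ (i,j)"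
    and x: "x < n"
  shows "\<sigma> ` down_set n A x = down_set n A (\<sigma> x)"
proof
  show "\<sigma> ` down_set n A x \<subseteq> down_set n A (\<sigma> x)"
    using bij hom x by (auto simp: down_set_def bij_betw_def)
  show "down_set n A (\<sigma> x) \<subseteq> \<sigma> ` down_set n A x"
  proof
    fix y assume "y \<in> down_set n A (\<sigma> x)"
    then have y: "y < n" "A $$ (\<sigma> x, y) = 1"
      by (auto simp: down_set_def)
    then obtain z where "z < n" "y = \<sigma> z"
      using bij by (metis bij_betw_def imageE lessThan_iff)
    then show "y \<in> \<sigma> ` down_set n A x"
      using y hom x by (auto simp: down_set_def)
  qed
qed

lemma poset_automorphism_eq_id:
  assumes A: "poset_matrix n A"
    and distinct_card: "\<forall>v w. poset_vector A v \<and> poset_vector A w \<and> v \<noteq> w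
               \<longrightarrow> card (supp v) \<noteq> card (supp w)"
    and bij: "bij_betw \<sigma> {..<n} {..<n}"
    and hom: "\<And>i j. i < n \<Longrightarrow> j < n \<Longrightarrow> A $$ (\<sigma> i, \<sigma> j) = A $$ (i,j)"
    and x: "x < n"
  shows "\<sigma> x = x"
proof -
  have \<sigma>x: "\<sigma> x < n"
    using bij x by (auto simp: bij_betw_def)
  have "\<exists>v. poset_vector A v \<and> supp v = down_set n A y" if "y < n" for y
    using ex_poset_vector_supp[OF A down_set_subset] down_set_down_closed[OF A that] by blast
  then obtain u w where u: "poset_vector A u" "supp u = down_set n A x"
    and w: "poset_vector A w" "supp w = down_set n A (\<sigma> x)"
    using x \<sigma>x by meson
  have "card (down_set n A (\<sigma> x)) = card (\<sigma> ` down_set n A x)"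
    using image_down_set[OF bij hom x] by simp
  also have "\<dots> = card (down_set n A x)"
    by (intro card_image inj_on_subset[OF bij_betw_imp_inj_on[OF bij] down_set_subset])
  finally have "w = u"
    using distinct_card u w by metis
  then have "down_set n A (\<sigma> x) = down_set n A x"
    using u w by simp
  then show ?thesis
    using down_set_inj[OF A \<sigma>x x] by simp
qed

lemma perm_matrix_carrier: "perm_matrix n Q \<Longrightarrow> Q \<in> carrier_mat n n"
  by (simp add: perm_matrix_def)

lemma perm_matrix_one: "perm_matrix n (1\<^sub>m n)"
  unfolding perm_matrix_def by (auto split: if_splits)

definition perm_of_mat :: "nat \<Rightarrow> int mat \<Rightarrow> nat \<Rightarrow> nat" where
  "perm_of_mat n Q j = (THE i. i < n \<and> Q $$ (i,j) = 1)"

lemma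
  assumes Q: "perm_matrix n Q" and j: "j < n"
  shows perm_of_mat_less: "perm_of_mat n Q j < n"
    and perm_matrix_index: "\<And>i. i < n \<Longrightarrow> Q $$ (i,j) = of_bool (i = perm_of_mat n Q j)"
proof -
  have ex1: "\<exists>!i. i < n \<and> Q $$ (i,j) = 1"
    using Q j by (simp add: perm_matrix_def)
  then have the: "perm_of_mat n Q j < n \<and> Q $$ (perm_of_mat n Q j, j) = 1"
    unfolding perm_of_mat_def by (rule theI')
  then show "perm_of_mat n Q j < n"
    by simp
  fix i assume i: "i < n"
  have "Q $$ (i,j) \<in> {0,1}"
    using Q i j by (simp add: perm_matrix_def)
  then show "Q $$ (i,j) = of_bool (i = perm_of_mat n Q j)"
    using ex1 the i by auto
qed

lemma bij_betw_perm_of_mat: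
  assumes Q: "perm_matrix n Q"
  shows "bij_betw (perm_of_mat n Q) {..<n} {..<n}"
proof -
  have "inj_on (perm_of_mat n Q) {..<n}"
  proof (rule inj_onI)
    fix j k assume jk: "j \<in> {..<n}" "k \<in> {..<n}" "perm_of_mat n Q j = perm_of_mat n Q k"
    let ?r = "perm_of_mat n Q j"
    have "\<exists>!l. l < n \<and> Q $$ (?r, l) = 1"
      using Q perm_of_mat_less[OF Q] jk(1) by (simp add: perm_matrix_def)
    moreover have "Q $$ (?r, j) = 1" "Q $$ (?r, k) = 1"
      using perm_matrix_index[OF Q] perm_of_mat_less[OF Q] jk by simp_all
    ultimately show "j = k"
      using jk(1,2) by blast
  qed
  moreover have "perm_of_mat n Q ` {..<n} \<subseteq> {..<n}"
    using perm_of_mat_less[OF Q] by auto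
  ultimately show ?thesis
    by (simp add: bij_betw_def endo_inj_surj)
qed

lemma index_mult_mat_sum:
  assumes "B \<in> carrier_mat m k" "C \<in> carrier_mat k l" "i < m" "j < l"
  shows "(B * C) $$ (i,j) = (\<Sum>r\<in>{0..<k}. B $$ (i,r) * C $$ (r,j))"
  using assms by (simp add: scalar_prod_def)

lemma perm_matrix_conjugate_index:
  assumes Q: "perm_matrix n Q" and A: "A \<in> carrier_mat n n" and i: "i < n" and j: "j < n"
  shows "(transpose_mat Q * A * Q) $$ (i,j) = A $$ (perm_of_mat n Q i, perm_of_mat n Q j)"
proof -
  let ?\<sigma> = "perm_of_mat n Q"
  have QC: "Q \<in> carrier_mat n n"
    using perm_matrix_carrier[OF Q] .
  have left: "(transpose_mat Q * A) $$ (i,l) = A $$ (?\<sigma> i, l)" if l: "l < n" for l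
  proof -
    have "(transpose_mat Q * A) $$ (i,l) = (\<Sum>k\<in>{0..<n}. transpose_mat Q $$ (i,k) * A $$ (k,l))"
      using QC A i l by (intro index_mult_mat_sum) auto
    also have "\<dots> = (\<Sum>k\<in>{0..<n}. Q $$ (k,i) * A $$ (k,l))"
      using QC i by (intro sum.cong) auto
    also have "\<dots> = (\<Sum>k\<in>{0..<n}. if k = ?\<sigma> i then A $$ (k,l) else 0)"
      using perm_matrix_index[OF Q i] by (intro sum.cong) simp_all
    also have "\<dots> = A $$ (?\<sigma> i, l)"
      using perm_of_mat_less[OF Q i] by simp
    finally show ?thesis .
  qed
  have "(transpose_mat Q * A * Q) $$ (i,j) = (\<Sum>l\<in>{0..<n}. (transpose_mat Q * A) $$ (i,l) * Q $$ (l,j))"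
    using QC A i j by (intro index_mult_mat_sum) auto
  also have "\<dots> = (\<Sum>l\<in>{0..<n}. if l = ?\<sigma> j then A $$ (?\<sigma> i, l) else 0)"
    using left perm_matrix_index[OF Q j] by (intro sum.cong) simp_all
  also have "\<dots> = A $$ (?\<sigma> i, ?\<sigma> j)"
    using perm_of_mat_less[OF Q j] by simp
  finally show ?thesis .
qed

lemma perm_matrix_eq_one:
  assumes Q: "perm_matrix n Q" and id: "\<And>j. j < n \<Longrightarrow> perm_of_mat n Q j = j"
  shows "Q = 1\<^sub>m n"
proof (rule eq_matI)
  show "dim_row Q = dim_row (1\<^sub>m n)" "dim_col Q = dim_col (1\<^sub>m n)"
    using perm_matrix_carrier[OF Q] by simp_all
  fix i j assume "i < dim_row (1\<^sub>m n)" "j < dim_col (1\<^sub>m n)"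
  then show "Q $$ (i,j) = 1\<^sub>m n $$ (i,j)"
    using perm_matrix_index[OF Q] id by auto
qed

theorem theorem3p5:
  fixes n :: nat and A :: "int mat"
  assumes "poset_matrix n A"
    and "\<forall>v w. poset_vector A v \<and> poset_vector A w \<and> v \<noteq> w
               \<longrightarrow> card (supp v) \<noteq> card (supp w)"
  shows "Aut n A = {1\<^sub>m n}"
proof
  show "{1\<^sub>m n} \<subseteq> Aut n A"
    using perm_matrix_one poset_matrix_carrier[OF assms(1)] by (simp add: Aut_def)
  show "Aut n A \<subseteq> {1\<^sub>m n}"
  proof
    fix Q assume "Q \<in> Aut n A"
    then have Q: "perm_matrix n Q" and conj: "transpose_mat Q * A * Q = A"
      by (simp_all add: Aut_def)
    have "A $$ (perm_of_mat n Q i, perm_of_mat n Q j) = A $$ (i,j)" if "i < n" "j < n" for i j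
      using perm_matrix_conjugate_index[OF Q poset_matrix_carrier[OF assms(1)] that] conj by simp
    then have "perm_of_mat n Q j = j" if "j < n" for j
      using poset_automorphism_eq_id[OF assms bij_betw_perm_of_mat[OF Q]] that by blast
    then show "Q \<in> {1\<^sub>m n}"
      using perm_matrix_eq_one[OF Q] by simp
  qed
qed

end
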